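(* Let $\gamma>0$, $\theta\in\mathbb R^d$ and $\mathcal X\subseteq\mathbb R^d$. For $x\in\mathcal X$ and $y\in\{0,1,2,\dots\}$ define $$w_\gamma(x,y,\theta)=\exp\Big[\gamma y\,\theta^\top x-\frac{\gamma}{\gamma+1}\exp\{(\gamma+1)\theta^\top x\}\Big],\qquad S_\gamma(\theta,x,y)=w_\gamma(x,y,\theta)\big[y-\exp\{(\gamma+1)\theta^\top x\}\big]x,$$ and $\Phi_\gamma(x,y,\theta)=\theta^\top S_\gamma(\theta,x,y)$. Then for every fixed $y\in\{0,1,2,\dots\}$, $\sup_{x\in\mathcal X}|\Phi_\gamma(x,y,\theta)|<\infty$.
   Context: $S_\gamma$ is the $\gamma$-estimating score for the Poisson log-linear regression model $p(y|x,\theta)=\frac1{y!}\exp\{y\theta^\top x-\exp(\theta^\top x)\}$, computed with the reference measure having mass $1/y!$ at $y$. *)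

theory Defs
  imports "HOL-Analysis.Analysis"
begin

text \<open>Weight of the gamma-estimating score for the Poisson log-linear model,
  with theta, x in R^d rendered as real^'n (d = CARD('n)).\<close>

definition w_gamma :: "real \<Rightarrow> real^'n \<Rightarrow> nat \<Rightarrow> real^'n \<Rightarrow> real" where
  "w_gamma \<gamma> x y \<theta> =
     exp (\<gamma> * real y * (\<theta> \<bullet> x) - \<gamma> / (\<gamma> + 1) * exp ((\<gamma> + 1) * (\<theta> \<bullet> x)))"

definition S_gamma :: "real \<Rightarrow> real^'n \<Rightarrow> real^'n \<Rightarrow> nat \<Rightarrow> real^'n" where
  "S_gamma \<gamma> \<theta> x y =
     (w_gamma \<gamma> x y \<theta> * (real y - exp ((\<gamma> + 1) * (\<theta> \<bullet> x)))) *\<^sub>R x"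

definition Phi_gamma :: "real \<Rightarrow> real^'n \<Rightarrow> nat \<Rightarrow> real^'n \<Rightarrow> real" where
  "Phi_gamma \<gamma> x y \<theta> = \<theta> \<bullet> S_gamma \<gamma> \<theta> x y"

end

theory Submission
  imports Defs "HOL-Real_Asymp.Real_Asymp"
begin

(*
  Phi_gamma(x, y, theta) depends on x only through t = theta' x: it equals g(t) with
    g(t) = t exp(gamma y t - gamma/(gamma+1) e^((gamma+1) t)) (y - e^((gamma+1) t)).
  The function g is continuous and tends to 0 at both ends of the real line: as t -> oo
  the doubly exponential factor wins, and as t -> -oo the last exponential factor tends
  to 1, so g(t) behaves like y t e^(gamma y t) - t e^((gamma y + gamma + 1) t), whose first
  term vanishes identically when y = 0.  A continuous function on the reals with limits
  at both ends is bounded, hence so is Phi_gamma.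
*)

lemma bounded_range_if_tendsto_at_infinity:
  fixes f :: "'a::{real_normed_vector, heine_borel} \<Rightarrow> 'b::metric_space"
  assumes "continuous_on UNIV f" and "(f \<longlongrightarrow> l) at_infinity"
  shows "bounded (range f)"
proof -
  have "\<forall>\<^sub>F x in at_infinity. dist (f x) l < 1"
    using assms(2) by (simp add: tendsto_iff)
  then obtain r where far: "\<And>x. r \<le> norm x \<Longrightarrow> f x \<in> ball l 1"
    by (auto simp: eventually_at_infinity dist_commute)
  have "bounded (f ` cball 0 r)"
    by (intro compact_imp_bounded compact_continuous_image
        continuous_on_subset[OF assms(1)]) auto
  moreover have "range f \<subseteq> f ` cball 0 r \<union> ball l 1"
    using far by (force simp: not_le)
  ultimately show ?thesis
    by (meson bounded_Un bounded_ball bounded_subset)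
qed

lemma tendsto_mult_exp_at_bot:
  fixes b :: real
  assumes "b > 0"
  shows "((\<lambda>t. t * exp (b * t)) \<longlongrightarrow> 0) at_bot"
  using assms by real_asymp

definition gamma_score_profile :: "real \<Rightarrow> real \<Rightarrow> real \<Rightarrow> real" where
  "gamma_score_profile \<gamma> y t =
     t * exp (\<gamma> * y * t - \<gamma> / (\<gamma> + 1) * exp ((\<gamma> + 1) * t)) * (y - exp ((\<gamma> + 1) * t))"

lemma Phi_gamma_eq_score_profile:
  "Phi_gamma \<gamma> x y \<theta> = gamma_score_profile \<gamma> (real y) (\<theta> \<bullet> x)"
  by (simp add: Phi_gamma_def S_gamma_def w_gamma_def gamma_score_profile_def inner_scaleR_right)

lemma continuous_on_gamma_score_profile: "continuous_on UNIV (gamma_score_profile \<gamma> y)"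
  unfolding gamma_score_profile_def by (intro continuous_intros)

lemma tendsto_gamma_score_profile_at_top:
  assumes "\<gamma> > 0" and "y \<ge> 0"
  shows "(gamma_score_profile \<gamma> y \<longlongrightarrow> 0) at_top"
proof (cases "y = 0")
  case True
  then show ?thesis
    unfolding gamma_score_profile_def using assms(1) by real_asymp
next
  case False
  with assms have "y > 0" by simp
  then show ?thesis
    unfolding gamma_score_profile_def using assms(1) by real_asymp
qed

lemma tendsto_gamma_score_profile_at_bot:
  assumes "\<gamma> > 0" and "y \<ge> 0"
  shows "(gamma_score_profile \<gamma> y \<longlongrightarrow> 0) at_bot"
proof -
  have factorization: "gamma_score_profile \<gamma> y = (\<lambda>t.
      (y * (t * exp (\<gamma> * y * t)) - t * exp ((\<gamma> * y + (\<gamma> + 1)) * t))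
        * exp (- (\<gamma> / (\<gamma> + 1) * exp ((\<gamma> + 1) * t))))"
    by (simp add: fun_eq_iff gamma_score_profile_def distrib_right algebra_simps
        flip: exp_add)
  have first: "((\<lambda>t. y * (t * exp (\<gamma> * y * t))) \<longlongrightarrow> 0) at_bot"
  proof (cases "y = 0")
    case False
    with assms have "\<gamma> * y > 0" by simp
    then show ?thesis
      using tendsto_mult_right_zero tendsto_mult_exp_at_bot by blast
  qed simp
  have second: "((\<lambda>t. t * exp ((\<gamma> * y + (\<gamma> + 1)) * t)) \<longlongrightarrow> 0) at_bot"
    using assms by (intro tendsto_mult_exp_at_bot add_nonneg_pos) simp_all
  have damping: "((\<lambda>t. exp (- (\<gamma> / (\<gamma> + 1) * exp ((\<gamma> + 1) * t)))) \<longlongrightarrow> 1) at_bot"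
    using assms by real_asymp
  show ?thesis
    unfolding factorization using tendsto_mult[OF tendsto_diff[OF first second] damping] by simp
qed

lemma bounded_range_gamma_score_profile:
  assumes "\<gamma> > 0" and "y \<ge> 0"
  shows "bounded (range (gamma_score_profile \<gamma> y))"
proof (rule bounded_range_if_tendsto_at_infinity)
  show "continuous_on UNIV (gamma_score_profile \<gamma> y)"
    by (rule continuous_on_gamma_score_profile)
  show "(gamma_score_profile \<gamma> y \<longlongrightarrow> 0) at_infinity"
    unfolding at_infinity_eq_at_top_bot
    using assms tendsto_gamma_score_profile_at_top tendsto_gamma_score_profile_at_bot
    by (blast intro: filterlim_sup)
qed

theorem mainTheorem9:
  fixes \<gamma> :: real and \<theta> :: "real^'n" and X :: "(real^'n) set" and y :: nat
  assumes "\<gamma> > 0"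
  shows "bdd_above ((\<lambda>x. \<bar>Phi_gamma \<gamma> x y \<theta>\<bar>) ` X)"
proof -
  obtain B where B: "\<And>t. \<bar>gamma_score_profile \<gamma> (real y) t\<bar> \<le> B"
    using bounded_range_gamma_score_profile[OF assms, of "real y"]
    by (auto simp: bounded_iff)
  show ?thesis
    using B by (intro bdd_aboveI2) (simp add: Phi_gamma_eq_score_profile)
qed

end
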